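(* Let $A,B,C$ be non-empty convex compact subsets of $\mathbb{R}$ (i.e. compact intervals). Then the metric sum is associative on them: $$(A\oplus B)\oplus C= A\oplus (B\oplus C)=A\oplus B\oplus C.$$
   Context: For non-empty compact $A,B\subseteq\mathbb{R}$ and $b\in\mathbb{R}$, let $D(b,A)=\min_{a\in A}|b-a|$ and $\Lambda_A(b)=\{a\in A: |b-a|=D(b,A)\}$. The set of metric pairs is $\Lambda(A,B)=\{(a,b)\in A\times B: a\in\Lambda_A(b)\text{ or } b\in\Lambda_B(a)\}$. For non-empty compact $A_0,\dots,A_N\subseteq\mathbb{R}$, the metric chains are $\mathrm{Ch}(A_0,\dots,A_N)=\{(a_0,\dots,a_N)\in A_0\times\cdots\times A_N: (a_j,a_{j+1})\in\Lambda(A_j,A_{j+1}),\ j=0,\dots,N-1\}$, and for $\lambda_0,\dots,\lambda_N\in\mathbb{R}$ the metric linear combination is $\bigoplus_{j=0}^N\lambda_jA_j=\{\sum_{j=0}^N\lambda_ja_j:(a_0,\dots,a_N)\in\mathrm{Ch}(A_0,\dots,A_N)\}$. In particular $A\oplus B=\{a+b:(a,b)\in\Lambda(A,B)\}$ and $A\oplus B\oplus C=\{a+b+c:(a,b,c)\in\mathrm{Ch}(A,B,C)\}$. *)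

theory Defs
  imports "HOL-Analysis.Analysis"
begin

text \<open>D(b,A) = min over a in A of |b - a| (for non-empty compact A this minimum
  is attained and equals the infimum, i.e. the library's infdist).\<close>
definition Dist :: "real \<Rightarrow> real set \<Rightarrow> real" where
  "Dist b A = infdist b A"

definition nearest :: "real set \<Rightarrow> real \<Rightarrow> real set" where
  "nearest A b = {a \<in> A. \<bar>b - a\<bar> = Dist b A}"

definition metric_pairs :: "real set \<Rightarrow> real set \<Rightarrow> (real \<times> real) set" where
  "metric_pairs A B = {(a, b) \<in> A \<times> B. a \<in> nearest A b \<or> b \<in> nearest B a}"

definition metric_sum :: "real set \<Rightarrow> real set \<Rightarrow> real set" where
  "metric_sum A B = {a + b | a b. (a, b) \<in> metric_pairs A B}"

definition metric_chains3 :: "real set \<Rightarrow> real set \<Rightarrow> real set \<Rightarrow> (real \<times> real \<times> real) set" where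
  "metric_chains3 A B C = {(a, b, c). a \<in> A \<and> b \<in> B \<and> c \<in> C \<and>
       (a, b) \<in> metric_pairs A B \<and> (b, c) \<in> metric_pairs B C}"

definition metric_sum3 :: "real set \<Rightarrow> real set \<Rightarrow> real set \<Rightarrow> real set" where
  "metric_sum3 A B C = {a + b + c | a b c. (a, b, c) \<in> metric_chains3 A B C}"

end

theory Submission
  imports Defs
begin

text \<open>On intervals the nearest-point map is the clamp onto the interval, and for every \<open>t\<close>
  the clamps of \<open>t\<close> onto two intervals form a metric pair. Summing the clamps of \<open>t\<close> gives a
  continuous function running from the sum of the left endpoints to the sum of the right
  endpoints, so by the intermediate value theorem every metric sum of intervals, with two or
  three summands and in either bracketing, is the full Minkowski sum of the intervals.\<close>

lemma clamp_real: "a \<le> b \<Longrightarrow> clamp a b (t::real) = max a (min b t)"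
  unfolding clamp_def Basis_real_def by auto

lemma continuous_on_clamp: "continuous_on S (clamp a b)"
  using clamp_continuous_at[of a b id] by (simp add: continuous_at_imp_continuous_on)

lemma Dist_atLeastAtMost:
  assumes "a \<le> b"
  shows "Dist t {a..b} = \<bar>t - clamp a b t\<bar>"
proof -
  have nonempty: "{a..b} \<noteq> {}" using assms by simp
  have "infdist t {a..b} \<le> dist t (clamp a b t)"
    using assms by (intro infdist_le) (simp add: clamp_real)
  moreover have "dist t (clamp a b t) \<le> infdist t {a..b}"
    unfolding infdist_notempty[OF nonempty]
    by (rule cINF_greatest[OF nonempty]) (auto simp: dist_real_def clamp_real assms)
  ultimately show ?thesis by (simp add: Dist_def dist_real_def)
qed

lemma nearest_atLeastAtMost: "a \<le> b \<Longrightarrow> nearest {a..b} t = {clamp a b t}"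
  by (auto simp: nearest_def Dist_atLeastAtMost clamp_real)

lemma clamps_in_metric_pairs:
  assumes "a1 \<le> a2" "b1 \<le> b2"
  shows "(clamp a1 a2 t, clamp b1 b2 t) \<in> metric_pairs {a1..a2} {b1..b2}"
  using assms by (auto simp: metric_pairs_def nearest_atLeastAtMost clamp_real max_def min_def)

lemma metric_sum_atLeastAtMost:
  assumes "a1 \<le> a2" "b1 \<le> b2"
  shows "metric_sum {a1..a2} {b1..b2} = {a1 + b1..a2 + b2}"
proof
  show "metric_sum {a1..a2} {b1..b2} \<subseteq> {a1 + b1..a2 + b2}"
    by (auto simp: metric_sum_def metric_pairs_def)
next
  show "{a1 + b1..a2 + b2} \<subseteq> metric_sum {a1..a2} {b1..b2}"
  proof
    fix s assume s: "s \<in> {a1 + b1..a2 + b2}"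
    let ?f = "\<lambda>t. clamp a1 a2 t + clamp b1 b2 t"
    have "\<exists>t\<ge>min a1 b1. t \<le> max a2 b2 \<and> ?f t = s"
      using s assms
      by (intro IVT') (auto simp: clamp_real intro!: continuous_intros continuous_on_clamp)
    then obtain t where "?f t = s" by blast
    with clamps_in_metric_pairs[OF assms, of t] show "s \<in> metric_sum {a1..a2} {b1..b2}"
      unfolding metric_sum_def by blast
  qed
qed

lemma metric_sum3_atLeastAtMost:
  assumes "a1 \<le> a2" "b1 \<le> b2" "c1 \<le> c2"
  shows "metric_sum3 {a1..a2} {b1..b2} {c1..c2} = {a1 + b1 + c1..a2 + b2 + c2}"
proof
  show "metric_sum3 {a1..a2} {b1..b2} {c1..c2} \<subseteq> {a1 + b1 + c1..a2 + b2 + c2}"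
    by (auto simp: metric_sum3_def metric_chains3_def)
next
  show "{a1 + b1 + c1..a2 + b2 + c2} \<subseteq> metric_sum3 {a1..a2} {b1..b2} {c1..c2}"
  proof
    fix s assume s: "s \<in> {a1 + b1 + c1..a2 + b2 + c2}"
    let ?f = "\<lambda>t. clamp a1 a2 t + clamp b1 b2 t + clamp c1 c2 t"
    have "\<exists>t\<ge>min a1 (min b1 c1). t \<le> max a2 (max b2 c2) \<and> ?f t = s"
      using s assms
      by (intro IVT') (auto simp: clamp_real intro!: continuous_intros continuous_on_clamp)
    then obtain t where "?f t = s" by blast
    moreover have "(clamp a1 a2 t, clamp b1 b2 t, clamp c1 c2 t)
        \<in> metric_chains3 {a1..a2} {b1..b2} {c1..c2}"
      using clamps_in_metric_pairs[OF assms(1,2), of t] clamps_in_metric_pairs[OF assms(2,3), of t]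
      by (simp add: metric_chains3_def metric_pairs_def)
    ultimately show "s \<in> metric_sum3 {a1..a2} {b1..b2} {c1..c2}"
      unfolding metric_sum3_def by blast
  qed
qed

lemma compact_convex_real_obtains_interval:
  fixes A :: "real set"
  assumes "A \<noteq> {}" "convex A" "compact A"
  obtains a b where "a \<le> b" "A = {a..b}"
  using assms connected_compact_interval_1 convex_connected by (metis atLeastatMost_empty_iff)

theorem proposition2p3:
  fixes A B C :: "real set"
  assumes "A \<noteq> {}" "convex A" "compact A"
      and "B \<noteq> {}" "convex B" "compact B"
      and "C \<noteq> {}" "convex C" "compact C"
  shows "metric_sum (metric_sum A B) C = metric_sum A (metric_sum B C)
       \<and> metric_sum A (metric_sum B C) = metric_sum3 A B C"
proof -
  obtain a1 a2 where A: "a1 \<le> a2" "A = {a1..a2}"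
    using compact_convex_real_obtains_interval assms(1-3) by blast
  obtain b1 b2 where B: "b1 \<le> b2" "B = {b1..b2}"
    using compact_convex_real_obtains_interval assms(4-6) by blast
  obtain c1 c2 where C: "c1 \<le> c2" "C = {c1..c2}"
    using compact_convex_real_obtains_interval assms(7-9) by blast
  have "a1 + b1 \<le> a2 + b2" "b1 + c1 \<le> b2 + c2" using A B C by auto
  then show ?thesis
    using A B C by (simp add: metric_sum_atLeastAtMost metric_sum3_atLeastAtMost add.assoc)
qed

end
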